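(* (a) $\Delta'\in\mathbb{Q}[x_0,\ldots,x_4]$ is a symmetric polynomial, homogeneous of degree eight, and absolutely irreducible. (b) One has $\Delta'(0,x_1,\ldots,x_4)=D^2$ for a symmetric, homogeneous quartic form $D\in\mathbb{Q}[x_1,\ldots,x_4]$.
   Context: $$\Delta'(x_0,\ldots,x_4):=\prod_{i_1,\ldots,i_4\in\{0,1\}}\big(\sqrt{x_0}+(-1)^{i_1}\sqrt{x_1}+(-1)^{i_2}\sqrt{x_2}+(-1)^{i_3}\sqrt{x_3}+(-1)^{i_4}\sqrt{x_4}\big),$$ a priori an element of $\mathbb{Q}[\sqrt{x_0},\ldots,\sqrt{x_4}]$. *)

theory Defs
  imports Complex_Main "HOL-Library.Poly_Mapping" "HOL-Computational_Algebra.Factorial_Ring"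
    "HOL-Combinatorics.Permutations"
begin

text \<open>Multivariate polynomials in the variables x_0, x_1, ... (indexed by nat) with
  coefficients in 'a: finitely supported maps from monomials (exponent vectors) to 'a.\<close>
type_synonym 'a mpoly = "(nat \<Rightarrow>\<^sub>0 nat) \<Rightarrow>\<^sub>0 'a"

definition Var :: "nat \<Rightarrow> 'a::comm_ring_1 mpoly" where
  "Var i = Poly_Mapping.single (Poly_Mapping.single i 1) 1"

definition Const :: "'a::comm_ring_1 \<Rightarrow> 'a mpoly" where
  "Const c = Poly_Mapping.single 0 c"

definition subst :: "(nat \<Rightarrow> 'a::comm_ring_1 mpoly) \<Rightarrow> 'a mpoly \<Rightarrow> 'a mpoly" where
  "subst s p = (\<Sum>m\<in>Poly_Mapping.keys p.
      Const (Poly_Mapping.lookup p m) * (\<Prod>i\<in>Poly_Mapping.keys m. s i ^ Poly_Mapping.lookup m i))"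

definition vars :: "'a::zero mpoly \<Rightarrow> nat set" where
  "vars p = (\<Union>m\<in>Poly_Mapping.keys p. Poly_Mapping.keys m)"

definition total_deg :: "(nat \<Rightarrow>\<^sub>0 nat) \<Rightarrow> nat" where
  "total_deg m = (\<Sum>i\<in>Poly_Mapping.keys m. Poly_Mapping.lookup m i)"

definition homogeneous :: "nat \<Rightarrow> 'a::zero mpoly \<Rightarrow> bool" where
  "homogeneous d p \<longleftrightarrow> (\<forall>m\<in>Poly_Mapping.keys p. total_deg m = d)"

definition symmetric_in :: "nat set \<Rightarrow> 'a::comm_ring_1 mpoly \<Rightarrow> bool" where
  "symmetric_in V p \<longleftrightarrow> (\<forall>\<pi>. \<pi> permutes V \<longrightarrow> subst (\<lambda>i. Var (\<pi> i)) p = p)"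

text \<open>The product over all sign choices, as a polynomial in y_i = sqrt x_i.\<close>
definition Delta_sqrt :: "rat mpoly" where
  "Delta_sqrt = (\<Prod>S\<in>Pow {1..4::nat}.
      Var 0 + (\<Sum>i\<in>{1..4}. (if i \<in> S then - Var i else Var i)))"

end

(*
  Write y_i for the square root of x_i. The sixteen linear forms
  L_S = y_0 + sum_{i notin S} y_i - sum_{i in S} y_i (S a subset of {1..4}) are permuted by every
  sign change y_j -> -y_j with 1 <= j <= 4, and turned into minus one another, in pairs, by y_0 -> -y_0.
  Their product P is therefore invariant under all sign changes, so only even exponents occur in P
  and P = Delta'(y_0^2, ..., y_4^2) for a unique polynomial Delta'. In the same way P is invariant
  under all permutations of y_0, ..., y_4, which makes Delta' symmetric; and for y_0 = 0 the factor
  L_S is, up to sign, the factor L_{S'} with S' the complement of S in {1..4}, so P becomes a square.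

  For absolute irreducibility suppose Delta' = F G over a field of characteristic zero. Then
  P = F(y^2) G(y^2), and the prime linear form L_{} divides one side, say F(y^2). As F(y^2) is
  invariant under the sign changes of y_1, ..., y_4, all sixteen pairwise non-associated forms L_S
  divide it, hence so does P; thus G(y^2), and with it G, is a unit.
*)

theory Submission
  imports Defs
begin

section \<open>Substitution is a ring homomorphism\<close>

definition power_product :: "(nat \<Rightarrow> 'a::comm_ring_1 mpoly) \<Rightarrow> (nat \<Rightarrow>\<^sub>0 nat) \<Rightarrow> 'a mpoly" where
  "power_product s m = (\<Prod>i\<in>Poly_Mapping.keys m. s i ^ Poly_Mapping.lookup m i)"

lemma power_product_superset:
  assumes "finite K" "Poly_Mapping.keys m \<subseteq> K"
  shows "power_product s m = (\<Prod>i\<in>K. s i ^ Poly_Mapping.lookup m i)"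
  unfolding power_product_def
  by (rule prod.mono_neutral_left) (use assms in \<open>auto simp: in_keys_iff\<close>)

lemma power_product_zero [simp]: "power_product s 0 = 1"
  by (simp add: power_product_def)

lemma power_product_add: "power_product s (m + n) = power_product s m * power_product s n"
proof -
  let ?K = "Poly_Mapping.keys m \<union> Poly_Mapping.keys n"
  have "power_product s (m + n) = (\<Prod>i\<in>?K. s i ^ Poly_Mapping.lookup m i * s i ^ Poly_Mapping.lookup n i)"
    using keys_add[of m n] by (subst power_product_superset) (auto simp: lookup_add power_add)
  then show ?thesis
    by (simp add: prod.distrib power_product_superset[of ?K])
qed

lemma Const_zero [simp]: "Const 0 = 0"
  by (simp add: Const_def)

lemma Const_one [simp]: "Const 1 = 1"
  by (simp add: Const_def)

lemma Const_add: "Const (a + b) = Const a + Const b"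
  by (simp add: Const_def single_add)

lemma Const_mult: "Const (a * b) = Const a * Const b"
  by (simp add: Const_def mult_single)

lemma Const_uminus: "Const (- a) = - Const a"
  by (simp add: Const_def single_uminus)

lemma Const_power: "Const (c ^ n) = Const c ^ n"
  by (induction n) (auto simp: Const_mult)

lemma Const_neg_one_power: "Const ((-1) ^ n) = (-1) ^ n"
  by (simp add: Const_power Const_uminus)

lemma Const_prod: "Const (\<Prod>x\<in>A. f x) = (\<Prod>x\<in>A. Const (f x))"
  by (induction A rule: infinite_finite_induct) (auto simp: Const_mult)

lemma Const_mult_single: "Const c * Poly_Mapping.single m d = Poly_Mapping.single m (c * d)"
  by (simp add: Const_def mult_single)

lemma mpoly_eq_sum_single:
  "p = (\<Sum>m\<in>Poly_Mapping.keys p. Poly_Mapping.single m (Poly_Mapping.lookup p m))"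
  by (rule poly_mapping_eqI) (simp add: lookup_sum lookup_single when_def in_keys_iff)

lemma mult_eq_sum_single:
  "p * q = (\<Sum>m\<in>Poly_Mapping.keys p. \<Sum>n\<in>Poly_Mapping.keys q.
     Poly_Mapping.single (m + n) (Poly_Mapping.lookup p m * Poly_Mapping.lookup q n))"
  by (subst (1 2) mpoly_eq_sum_single) (simp add: sum_product mult_single)

lemma subst_superset:
  assumes "finite K" "Poly_Mapping.keys p \<subseteq> K"
  shows "subst s p = (\<Sum>m\<in>K. Const (Poly_Mapping.lookup p m) * power_product s m)"
  unfolding subst_def power_product_def[symmetric]
  by (rule sum.mono_neutral_left) (use assms in \<open>auto simp: in_keys_iff\<close>)

lemma subst_eq: "subst s p = (\<Sum>m\<in>Poly_Mapping.keys p. Const (Poly_Mapping.lookup p m) * power_product s m)"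
  by (rule subst_superset) auto

lemma subst_zero [simp]: "subst s 0 = 0"
  by (simp add: subst_def)

lemma subst_add: "subst s (p + q) = subst s p + subst s q"
proof -
  let ?K = "Poly_Mapping.keys p \<union> Poly_Mapping.keys q"
  have "subst s (p + q) = (\<Sum>m\<in>?K. Const (Poly_Mapping.lookup p m) * power_product s m
                                   + Const (Poly_Mapping.lookup q m) * power_product s m)"
    using keys_add[of p q] by (subst subst_superset) (auto simp: lookup_add Const_add distrib_right)
  then show ?thesis
    by (simp add: sum.distrib subst_superset[of ?K])
qed

lemma subst_single: "subst s (Poly_Mapping.single m c) = Const c * power_product s m"
  by (cases "c = 0") (simp_all add: subst_def power_product_def)

lemma subst_sum: "subst s (\<Sum>x\<in>A. f x) = (\<Sum>x\<in>A. subst s (f x))"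
  by (induction A rule: infinite_finite_induct) (auto simp: subst_add)

lemma subst_uminus: "subst s (- p) = - subst s p"
  by (metis add.right_inverse add_eq_0_iff subst_add subst_zero)

lemma subst_mult: "subst s (p * q) = subst s p * subst s q"
proof -
  have "subst s (p * q) = (\<Sum>m\<in>Poly_Mapping.keys p. \<Sum>n\<in>Poly_Mapping.keys q.
     Const (Poly_Mapping.lookup p m) * power_product s m * (Const (Poly_Mapping.lookup q n) * power_product s n))"
    by (subst mult_eq_sum_single) (simp add: subst_sum subst_single power_product_add Const_mult ac_simps)
  then show ?thesis
    by (simp add: subst_eq sum_product)
qed

lemma subst_one [simp]: "subst s 1 = 1"
  by (metis single_one subst_single power_product_zero Const_one mult_1)

lemma subst_prod: "subst s (\<Prod>x\<in>A. f x) = (\<Prod>x\<in>A. subst s (f x))"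
  by (induction A rule: infinite_finite_induct) (auto simp: subst_mult)

lemma subst_power: "subst s (p ^ n) = subst s p ^ n"
  by (induction n) (auto simp: subst_mult)

lemma subst_Var [simp]: "subst s (Var i) = s i"
  by (simp add: Var_def subst_single power_product_def Const_def[symmetric])

lemma subst_Const [simp]: "subst s (Const c) = Const c"
  by (simp add: Const_def subst_single)

lemma subst_subst: "subst s (subst t p) = subst (\<lambda>i. subst s (t i)) p"
proof -
  have "subst s (power_product t m) = power_product (\<lambda>i. subst s (t i)) m" for m
    by (simp add: power_product_def subst_prod subst_power)
  then show ?thesis
    by (simp add: subst_eq[of t] subst_eq[of "\<lambda>i. subst s (t i)"] subst_sum subst_mult)
qed

lemma Var_power: "Var i ^ k = Poly_Mapping.single (Poly_Mapping.single i k) 1"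
  by (induction k) (auto simp: Var_def mult_single single_add[symmetric] add.commute)

lemma prod_single_one:
  "finite A \<Longrightarrow> (\<Prod>x\<in>A. Poly_Mapping.single (f x) (1::'a::comm_ring_1)) = Poly_Mapping.single (\<Sum>x\<in>A. f x) 1"
  by (induction A rule: finite_induct) (auto simp: mult_single)

lemma power_product_Var: "power_product Var m = Poly_Mapping.single m 1"
proof -
  have "power_product Var m =
      (\<Prod>i\<in>Poly_Mapping.keys m. Poly_Mapping.single (Poly_Mapping.single i (Poly_Mapping.lookup m i)) 1)"
    by (simp add: power_product_def Var_power)
  also have "\<dots> = Poly_Mapping.single (\<Sum>i\<in>Poly_Mapping.keys m. Poly_Mapping.single i (Poly_Mapping.lookup m i)) 1"
    by (simp add: prod_single_one)
  also have "\<dots> = Poly_Mapping.single m 1"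
    by (simp flip: mpoly_eq_sum_single)
  finally show ?thesis .
qed

lemma subst_Var_id [simp]: "subst Var p = p"
  by (simp add: subst_eq power_product_Var Const_mult_single flip: mpoly_eq_sum_single)

lemma dvd_subst_diff:
  assumes "\<And>i. L dvd s i - t i"
  shows "L dvd subst s p - subst t p"
proof -
  have dvd_prod_diff: "L dvd (\<Prod>x\<in>A. f x) - (\<Prod>x\<in>A. g x)" if "\<And>x. L dvd f x - g x" for A f g
    using that
  proof (induction A rule: infinite_finite_induct)
    case (insert x F)
    have "f x * prod f F - g x * prod g F = f x * (prod f F - prod g F) + (f x - g x) * prod g F"
      by (simp add: algebra_simps)
    with insert show ?case by (simp add: dvd_add dvd_mult dvd_mult2)
  qed simp_all
  have dvd_power_diff: "L dvd f ^ n - g ^ n" if "L dvd f - g" for f g n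
    using dvd_prod_diff[of "\<lambda>_. f" "\<lambda>_. g" "{..<n}"] that by simp
  have "subst s p - subst t p = (\<Sum>m\<in>Poly_Mapping.keys p.
      Const (Poly_Mapping.lookup p m) * (power_product s m - power_product t m))"
    by (simp add: subst_eq sum_subtractf right_diff_distrib)
  also have "L dvd \<dots>"
    unfolding power_product_def
    by (intro dvd_sum dvd_mult dvd_prod_diff dvd_power_diff assms)
  finally show ?thesis .
qed

section \<open>Variables and degrees\<close>

lemma vars_subset_iff: "vars p \<subseteq> V \<longleftrightarrow> (\<forall>m\<in>Poly_Mapping.keys p. Poly_Mapping.keys m \<subseteq> V)"
  by (auto simp: vars_def)

lemma vars_add_subset: "vars p \<subseteq> V \<Longrightarrow> vars q \<subseteq> V \<Longrightarrow> vars (p + q) \<subseteq> V"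
  using keys_add[of p q] by (auto simp: vars_subset_iff)

lemma vars_mult_subset:
  assumes "vars p \<subseteq> V" "vars q \<subseteq> V"
  shows "vars (p * q) \<subseteq> V"
  unfolding vars_subset_iff
proof
  fix m assume "m \<in> Poly_Mapping.keys (p * q)"
  then obtain m1 m2 where "m = m1 + m2" "m1 \<in> Poly_Mapping.keys p" "m2 \<in> Poly_Mapping.keys q"
    using keys_mult by blast
  then show "Poly_Mapping.keys m \<subseteq> V"
    using assms keys_add[of m1 m2] unfolding vars_subset_iff by blast
qed

lemma vars_sum_subset: "(\<And>x. x \<in> A \<Longrightarrow> vars (f x) \<subseteq> V) \<Longrightarrow> vars (\<Sum>x\<in>A. f x) \<subseteq> V"
proof (induction A rule: infinite_finite_induct)
  case (insert x F)
  then show ?case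
    by (simp add: vars_add_subset)
qed (simp_all add: vars_def)

lemma vars_prod_subset:
  "(\<And>x. x \<in> A \<Longrightarrow> vars (f x) \<subseteq> V) \<Longrightarrow> vars (\<Prod>x\<in>A. f x :: 'a::comm_ring_1 mpoly) \<subseteq> V"
proof (induction A rule: infinite_finite_induct)
  case (insert x F)
  then show ?case
    by (simp add: vars_mult_subset)
qed (simp_all add: vars_def)

lemma total_deg_add: "total_deg (m + n) = total_deg m + total_deg n"
proof -
  let ?K = "Poly_Mapping.keys m \<union> Poly_Mapping.keys n"
  have total_deg_eq: "total_deg x = (\<Sum>i\<in>?K. Poly_Mapping.lookup x i)" if "Poly_Mapping.keys x \<subseteq> ?K" for x
    unfolding total_deg_def by (rule sum.mono_neutral_left) (use that in \<open>auto simp: in_keys_iff\<close>)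
  show ?thesis
    using keys_add[of m n] by (simp add: total_deg_eq lookup_add sum.distrib)
qed

lemma homogeneous_add: "homogeneous d p \<Longrightarrow> homogeneous d q \<Longrightarrow> homogeneous d (p + q)"
  using keys_add[of p q] by (auto simp: homogeneous_def)

lemma homogeneous_mult:
  assumes "homogeneous d p" "homogeneous e q"
  shows "homogeneous (d + e) (p * q)"
  unfolding homogeneous_def
proof
  fix m assume "m \<in> Poly_Mapping.keys (p * q)"
  then obtain m1 m2 where "m = m1 + m2" "m1 \<in> Poly_Mapping.keys p" "m2 \<in> Poly_Mapping.keys q"
    using keys_mult by blast
  then show "total_deg m = d + e"
    using assms by (simp add: homogeneous_def total_deg_add)
qed

lemma homogeneous_sum: "(\<And>x. x \<in> A \<Longrightarrow> homogeneous d (f x)) \<Longrightarrow> homogeneous d (\<Sum>x\<in>A. f x)"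
proof (induction A rule: infinite_finite_induct)
  case (insert x F)
  then show ?case
    by (simp add: homogeneous_add)
qed (simp_all add: homogeneous_def)

lemma homogeneous_prod:
  "(\<And>x. x \<in> A \<Longrightarrow> homogeneous d (f x))
     \<Longrightarrow> homogeneous (d * card A) (\<Prod>x\<in>A. f x :: 'a::comm_ring_1 mpoly)"
proof (induction A rule: infinite_finite_induct)
  case (insert x F)
  then show ?case
    using homogeneous_mult[of d "f x" "d * card F"] by (simp add: add.commute)
qed (auto simp: homogeneous_def total_deg_def)

section \<open>Sign changes and squared variables\<close>

abbreviation subst_sq :: "'a::comm_ring_1 mpoly \<Rightarrow> 'a mpoly" where
  "subst_sq \<equiv> subst (\<lambda>i. Var i ^ 2)"

lemma power_product_sign_flip:
  "power_product (Var(j := - Var j)) m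
     = Const ((-1) ^ Poly_Mapping.lookup m j) * power_product (Var :: nat \<Rightarrow> 'a::comm_ring_1 mpoly) m"
proof -
  let ?e = "\<lambda>i. (if i = j then -1 else 1 :: 'a) ^ Poly_Mapping.lookup m i"
  have "power_product (Var(j := - Var j)) m
      = (\<Prod>i\<in>Poly_Mapping.keys m. Const (?e i) * Var i ^ Poly_Mapping.lookup m i)"
    unfolding power_product_def
  proof (rule prod.cong[OF refl])
    fix i
    show "(Var(j := - Var j)) i ^ Poly_Mapping.lookup m i = Const (?e i) * Var i ^ Poly_Mapping.lookup m i"
      by (cases "i = j") (simp_all add: Const_neg_one_power power_minus[of "Var j"])
  qed
  also have "\<dots> = Const (\<Prod>i\<in>Poly_Mapping.keys m. ?e i) * power_product Var m"
    by (simp add: prod.distrib Const_prod power_product_def)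
  also have "(\<Prod>i\<in>Poly_Mapping.keys m. ?e i)
      = (\<Prod>i\<in>Poly_Mapping.keys m. if i = j then (-1) ^ Poly_Mapping.lookup m j else 1)"
    by (rule prod.cong) auto
  also have "\<dots> = (-1) ^ Poly_Mapping.lookup m j"
    by (simp add: prod.delta in_keys_iff)
  finally show ?thesis .
qed

lemma lookup_subst_sign_flip:
  "Poly_Mapping.lookup (subst (Var(j := - Var j)) p) m
     = (-1) ^ Poly_Mapping.lookup m j * Poly_Mapping.lookup (p :: 'a::comm_ring_1 mpoly) m"
proof -
  have "subst (Var(j := - Var j)) p = (\<Sum>n\<in>Poly_Mapping.keys p.
      Poly_Mapping.single n (Poly_Mapping.lookup p n * (-1) ^ Poly_Mapping.lookup n j))"
    by (simp add: subst_eq power_product_sign_flip power_product_Var Const_mult_single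
        flip: mult.assoc Const_mult)
  then show ?thesis
    by (simp add: lookup_sum lookup_single when_def in_keys_iff mult.commute)
qed

lemma even_exponent_if_sign_flip_invariant:
  fixes p :: "'a::field_char_0 mpoly"
  assumes "subst (Var(j := - Var j)) p = p" "m \<in> Poly_Mapping.keys p"
  shows "even (Poly_Mapping.lookup m j)"
proof (rule ccontr)
  assume "odd (Poly_Mapping.lookup m j)"
  then have "Poly_Mapping.lookup p m = - Poly_Mapping.lookup p m"
    using lookup_subst_sign_flip[of j p m] assms(1) by simp
  with assms(2) show False
    by (simp add: in_keys_iff)
qed

lemma power_product_squares: "power_product (\<lambda>i. Var i ^ 2) m = Poly_Mapping.single (m + m) 1"
proof -
  have "power_product (\<lambda>i. Var i ^ 2) m = power_product Var m ^ 2"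
    by (simp add: power_product_def prod_power_distrib flip: power_mult)
       (simp add: mult.commute)
  then show ?thesis
    by (simp add: power_product_Var power2_eq_square mult_single)
qed

lemma double_monomial_eq_iff: "m + m = n + n \<longleftrightarrow> m = (n :: nat \<Rightarrow>\<^sub>0 nat)"
proof
  assume "m + m = n + n"
  then have "Poly_Mapping.lookup m i = Poly_Mapping.lookup n i" for i
    by (metis add_self_div_2 lookup_add)
  then show "m = n"
    by (rule poly_mapping_eqI)
qed simp

lemma lookup_subst_sq:
  "Poly_Mapping.lookup (subst_sq p) k
     = (\<Sum>n\<in>Poly_Mapping.keys p. Poly_Mapping.lookup p n when k = n + n)"
proof -
  have "subst_sq p = (\<Sum>n\<in>Poly_Mapping.keys p. Poly_Mapping.single (n + n) (Poly_Mapping.lookup p n))"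
    by (simp add: subst_eq power_product_squares Const_mult_single)
  then show ?thesis
    by (simp add: lookup_sum lookup_single when_def eq_commute)
qed

lemma lookup_subst_sq_double [simp]:
  "Poly_Mapping.lookup (subst_sq p) (n + n) = Poly_Mapping.lookup p n"
  by (simp add: lookup_subst_sq double_monomial_eq_iff when_def in_keys_iff
      sum.delta[where S = "Poly_Mapping.keys p"] cong: if_cong)

lemma keys_subst_sq: "Poly_Mapping.keys (subst_sq p) = (\<lambda>n. n + n) ` Poly_Mapping.keys p"
proof (intro equalityI subsetI)
  fix k assume "k \<in> Poly_Mapping.keys (subst_sq p)"
  then obtain n where "n \<in> Poly_Mapping.keys p" "(Poly_Mapping.lookup p n when k = n + n) \<noteq> 0"
    by (auto simp: lookup_subst_sq in_keys_iff elim: sum.not_neutral_contains_not_neutral)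
  then show "k \<in> (\<lambda>n. n + n) ` Poly_Mapping.keys p"
    by (auto simp: when_def split: if_splits)
qed (auto simp: in_keys_iff)

lemma subst_sq_inject: "subst_sq p = subst_sq q \<longleftrightarrow> p = q"
  by (metis lookup_subst_sq_double poly_mapping_eqI)

lemma subst_sq_surj_if_even_exponents:
  assumes "\<And>m i. m \<in> Poly_Mapping.keys p \<Longrightarrow> even (Poly_Mapping.lookup m i)"
  shows "\<exists>q. subst_sq q = p"
proof
  let ?half = "Poly_Mapping.map (\<lambda>k. k div 2) :: (nat \<Rightarrow>\<^sub>0 nat) \<Rightarrow> _"
  have half: "?half m + ?half m = m" if "m \<in> Poly_Mapping.keys p" for m
  proof (rule poly_mapping_eqI)
    fix k
    show "Poly_Mapping.lookup (?half m + ?half m) k = Poly_Mapping.lookup m k"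
      using assms[OF that, of k] by (auto simp: lookup_add map.rep_eq when_def elim!: evenE)
  qed
  have "subst_sq (\<Sum>m\<in>Poly_Mapping.keys p. Poly_Mapping.single (?half m) (Poly_Mapping.lookup p m))
      = (\<Sum>m\<in>Poly_Mapping.keys p. Poly_Mapping.single m (Poly_Mapping.lookup p m))"
    by (simp add: subst_sum subst_single power_product_squares Const_mult_single half)
  then show "subst_sq (\<Sum>m\<in>Poly_Mapping.keys p. Poly_Mapping.single (?half m) (Poly_Mapping.lookup p m)) = p"
    by (simp flip: mpoly_eq_sum_single)
qed

lemma subst_sq_surj_if_sign_flip_invariant:
  fixes p :: "'a::field_char_0 mpoly"
  assumes "vars p \<subseteq> V" "\<And>j. j \<in> V \<Longrightarrow> subst (Var(j := - Var j)) p = p"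
  shows "\<exists>q. subst_sq q = p"
proof (rule subst_sq_surj_if_even_exponents)
  fix m i assume m: "m \<in> Poly_Mapping.keys p"
  show "even (Poly_Mapping.lookup m i)"
  proof (cases "i \<in> V")
    case True
    then show ?thesis
      using even_exponent_if_sign_flip_invariant[OF assms(2) m] by blast
  next
    case False
    then have "i \<notin> Poly_Mapping.keys m"
      using assms(1) m by (auto simp: vars_def)
    then show ?thesis
      by (simp add: in_keys_iff)
  qed
qed

lemma vars_subst_sq: "vars (subst_sq p) = vars p"
proof -
  have "Poly_Mapping.keys (n + n) = Poly_Mapping.keys (n :: nat \<Rightarrow>\<^sub>0 nat)" for n
    by (auto simp: in_keys_iff lookup_add)
  then show ?thesis
    by (simp add: vars_def keys_subst_sq)
qed

lemma homogeneous_subst_sq_iff: "homogeneous (2 * d) (subst_sq p) \<longleftrightarrow> homogeneous d p"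
  by (auto simp: homogeneous_def keys_subst_sq total_deg_add)

lemma subst_sq_subst_commute:
  assumes "\<And>i. subst_sq (s i) = s i ^ 2"
  shows "subst_sq (subst s p) = subst s (subst_sq p)"
  by (simp add: subst_subst subst_power assms)

lemma subst_sign_flip_subst_sq: "subst (Var(j := - Var j)) (subst_sq p) = subst_sq p"
proof -
  have "(\<lambda>i. (Var(j := - Var j)) i ^ 2) = (\<lambda>i. Var i ^ 2 :: 'a::comm_ring_1 mpoly)"
    by auto
  then show ?thesis
    by (simp add: subst_subst subst_power)
qed

section \<open>Units\<close>

lemma monomial_add_eq_0_iff: "m + n = 0 \<longleftrightarrow> m = 0 \<and> n = (0 :: nat \<Rightarrow>\<^sub>0 nat)"
  by (auto simp: poly_mapping_eq_iff lookup_add fun_eq_iff)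

lemma zero_le_monomial: "0 \<le> (m :: nat \<Rightarrow>\<^sub>0 nat)"
proof (cases "m = 0")
  case False
  then obtain k where "Poly_Mapping.lookup m k \<noteq> 0"
    by (metis poly_mapping_eqI lookup_zero)
  define k0 where "k0 = (LEAST k. Poly_Mapping.lookup m k \<noteq> 0)"
  have "Poly_Mapping.lookup m k0 \<noteq> 0" "\<And>k. k < k0 \<Longrightarrow> Poly_Mapping.lookup m k = 0"
    unfolding k0_def using \<open>Poly_Mapping.lookup m k \<noteq> 0\<close> by (auto intro: LeastI dest: not_less_Least)
  then have "less_fun (Poly_Mapping.lookup 0) (Poly_Mapping.lookup m)"
    by (auto simp: less_fun_def)
  then show ?thesis
    by (simp add: less_poly_mapping.rep_eq order_less_imp_le)
qed simp

lemma add_eq_add_iff_of_le: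
  fixes a b c d :: "'b::linordered_cancel_ab_semigroup_add"
  assumes "a \<le> c" "b \<le> d"
  shows "a + b = c + d \<longleftrightarrow> a = c \<and> b = d"
proof -
  have "a + b < c + d" if "a \<noteq> c \<or> b \<noteq> d"
    using that assms by (metis add_le_less_mono add_less_le_mono order_le_neq_trans)
  then show ?thesis
    by (metis order.irrefl)
qed

(* Max refers to the lexicographic order on exponent vectors, which is compatible with addition. *)
lemma lookup_mult_Max_keys:
  fixes p q :: "'a::comm_ring_1 mpoly"
  assumes "p \<noteq> 0" "q \<noteq> 0"
  defines "a \<equiv> Max (Poly_Mapping.keys p)" and "b \<equiv> Max (Poly_Mapping.keys q)"
  shows "Poly_Mapping.lookup (p * q) (a + b) = Poly_Mapping.lookup p a * Poly_Mapping.lookup q b"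
proof -
  have ab: "a \<in> Poly_Mapping.keys p" "b \<in> Poly_Mapping.keys q"
    using assms by (simp_all add: a_def b_def)
  have "Poly_Mapping.lookup (p * q) (a + b) = (\<Sum>m\<in>Poly_Mapping.keys p. \<Sum>n\<in>Poly_Mapping.keys q.
      if n = b then if m = a then Poly_Mapping.lookup p a * Poly_Mapping.lookup q b else 0 else 0)"
    unfolding mult_eq_sum_single lookup_sum lookup_single
  proof (intro sum.cong refl)
    fix m n assume "m \<in> Poly_Mapping.keys p" "n \<in> Poly_Mapping.keys q"
    then have "m \<le> a" "n \<le> b"
      by (simp_all add: a_def b_def)
    then have "m + n = a + b \<longleftrightarrow> m = a \<and> n = b"
      by (rule add_eq_add_iff_of_le)
    then show "(Poly_Mapping.lookup p m * Poly_Mapping.lookup q n when m + n = a + b)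
      = (if n = b then if m = a then Poly_Mapping.lookup p a * Poly_Mapping.lookup q b else 0 else 0)"
      by (auto simp: when_def)
  qed
  also have "\<dots> = Poly_Mapping.lookup p a * Poly_Mapping.lookup q b"
    using ab by simp
  finally show ?thesis .
qed

lemma is_unit_mpoly_iff:
  fixes u :: "'a::field mpoly"
  shows "u dvd 1 \<longleftrightarrow> u \<noteq> 0 \<and> Poly_Mapping.keys u \<subseteq> {0}"
proof
  assume "u dvd 1"
  then obtain v where uv: "1 = u * v" ..
  then have "u \<noteq> 0" "v \<noteq> 0"
    by auto
  let ?a = "Max (Poly_Mapping.keys u)" and ?b = "Max (Poly_Mapping.keys v)"
  have "Poly_Mapping.lookup (u * v) (?a + ?b) \<noteq> 0"
    using \<open>u \<noteq> 0\<close> \<open>v \<noteq> 0\<close> by (simp add: lookup_mult_Max_keys in_keys_iff[symmetric])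
  then have "?a = 0"
    by (simp flip: uv add: lookup_one monomial_add_eq_0_iff)
  have "Poly_Mapping.keys u \<subseteq> {0}"
  proof
    fix m assume "m \<in> Poly_Mapping.keys u"
    then have "m \<le> 0"
      using \<open>?a = 0\<close> by (metis Max_ge finite_keys)
    then show "m \<in> {0}"
      using zero_le_monomial[of m] by simp
  qed
  with \<open>u \<noteq> 0\<close> show "u \<noteq> 0 \<and> Poly_Mapping.keys u \<subseteq> {0}" ..
next
  assume u: "u \<noteq> 0 \<and> Poly_Mapping.keys u \<subseteq> {0}"
  then have "u = Const (Poly_Mapping.lookup u 0)"
    by (subst mpoly_eq_sum_single) (auto simp: Const_def subset_singleton_iff)
  moreover from u have "Poly_Mapping.lookup u 0 \<noteq> 0"
    by (auto simp: in_keys_iff subset_singleton_iff)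
  ultimately have "u * Const (inverse (Poly_Mapping.lookup u 0)) = 1"
    by (metis Const_mult Const_one right_inverse)
  then show "u dvd 1"
    by (metis dvdI)
qed

lemma is_unit_subst_sq_iff:
  fixes u :: "'a::field mpoly"
  shows "subst_sq u dvd 1 \<longleftrightarrow> u dvd 1"
proof -
  have "subst_sq u = 0 \<longleftrightarrow> u = 0"
    using subst_sq_inject[of u 0] by simp
  then show ?thesis
    by (auto simp: is_unit_mpoly_iff keys_subst_sq monomial_add_eq_0_iff)
qed

section \<open>Products over all sign choices\<close>

definition signed_sum :: "nat \<Rightarrow> nat set \<Rightarrow> (nat \<Rightarrow> 'a::comm_ring_1) \<Rightarrow> nat set \<Rightarrow> 'a" where
  "signed_sum a I f S = f a + (\<Sum>i\<in>I. if i \<in> S then - f i else f i)"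

definition signed_prod :: "nat \<Rightarrow> nat set \<Rightarrow> (nat \<Rightarrow> 'a::comm_ring_1) \<Rightarrow> 'a" where
  "signed_prod a I f = (\<Prod>S\<in>Pow I. signed_sum a I f S)"

definition toggle :: "nat \<Rightarrow> nat set \<Rightarrow> nat set" where
  "toggle j S = (if j \<in> S then S - {j} else insert j S)"

lemma Delta_sqrt_eq_signed_prod: "Delta_sqrt = signed_prod 0 {1..4} Var"
  by (simp add: Delta_sqrt_def signed_prod_def signed_sum_def)

lemma prod_reindex_involution:
  assumes "\<And>x. x \<in> A \<Longrightarrow> g x \<in> A" "\<And>x. x \<in> A \<Longrightarrow> g (g x) = x"
  shows "(\<Prod>x\<in>A. f (g x)) = (\<Prod>x\<in>A. f x)"
  by (rule prod.reindex_bij_witness[where i = g and j = g]) (use assms in auto)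

lemma even_card_Pow: "finite I \<Longrightarrow> I \<noteq> {} \<Longrightarrow> even (card (Pow I))"
  by (simp add: card_Pow card_gt_0_iff)

lemma signed_prod_cong:
  "(\<And>i. i \<in> insert a I \<Longrightarrow> f i = g i) \<Longrightarrow> signed_prod a I f = signed_prod a I g"
  unfolding signed_prod_def signed_sum_def by (intro prod.cong sum.cong arg_cong2[where f = "(+)"]) auto

lemma signed_sum_sign_flip:
  assumes "j \<in> I" "a \<notin> I"
  shows "signed_sum a I (f(j := - f j)) S = signed_sum a I f (toggle j S)"
  unfolding signed_sum_def using assms by (auto simp: toggle_def intro!: sum.cong)

lemma signed_sum_sign_flip_base:
  assumes "a \<notin> I" "S \<subseteq> I"
  shows "signed_sum a I (f(a := - f a)) S = - signed_sum a I f (I - S)"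
  unfolding signed_sum_def using assms by (auto simp flip: sum_negf intro!: sum.cong)

lemma signed_prod_sign_flip:
  assumes "finite I" "I \<noteq> {}" "a \<notin> I" "j \<in> insert a I"
  shows "signed_prod a I (f(j := - f j)) = signed_prod a I f"
proof (cases "j = a")
  case True
  have "signed_prod a I (f(j := - f j)) = (\<Prod>S\<in>Pow I. - signed_sum a I f (I - S))"
    unfolding signed_prod_def True by (rule prod.cong) (auto simp: signed_sum_sign_flip_base[OF assms(3)])
  also have "\<dots> = (\<Prod>S\<in>Pow I. signed_sum a I f (I - S))"
    using even_card_Pow[OF assms(1,2)] by (simp add: prod_uminus)
  also have "\<dots> = signed_prod a I f"
    unfolding signed_prod_def by (rule prod_reindex_involution) auto
  finally show ?thesis .
next
  case False
  with assms have "j \<in> I"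
    by simp
  then have "signed_prod a I (f(j := - f j)) = (\<Prod>S\<in>Pow I. signed_sum a I f (toggle j S))"
    unfolding signed_prod_def using assms(3) by (simp add: signed_sum_sign_flip)
  also have "\<dots> = signed_prod a I f"
    unfolding signed_prod_def by (rule prod_reindex_involution) (use \<open>j \<in> I\<close> in \<open>auto simp: toggle_def\<close>)
  finally show ?thesis .
qed

lemma signed_sum_transpose:
  assumes "b \<in> I" "c \<in> I" "a \<notin> I"
  shows "signed_sum a I (f \<circ> transpose b c) S = signed_sum a I f (transpose b c ` S)"
proof -
  let ?t = "transpose b c"
  have "(\<Sum>i\<in>I. if i \<in> S then - f (?t i) else f (?t i))
      = (\<Sum>i\<in>I. if ?t i \<in> ?t ` S then - f (?t i) else f (?t i))"
    by (simp add: inj_image_mem_iff)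
  also have "\<dots> = (\<Sum>k\<in>I. if k \<in> ?t ` S then - f k else f k)"
    by (rule sum.reindex_bij_witness[where i = ?t and j = ?t]) (use assms in \<open>auto simp: transpose_def\<close>)
  finally have "(\<Sum>i\<in>I. if i \<in> S then - f (?t i) else f (?t i))
      = (\<Sum>k\<in>I. if k \<in> ?t ` S then - f k else f k)" .
  moreover have "?t a = a"
    using assms by (auto simp: transpose_def)
  ultimately show ?thesis
    by (simp add: signed_sum_def o_def)
qed

lemma signed_prod_transpose:
  assumes "b \<in> I" "c \<in> I" "a \<notin> I"
  shows "signed_prod a I (f \<circ> transpose b c) = signed_prod a I f"
  unfolding signed_prod_def signed_sum_transpose[OF assms]
  by (rule prod_reindex_involution) (use assms in \<open>auto simp: image_image transpose_def\<close>)

lemma signed_sum_transpose_base: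
  assumes "b \<in> I" "a \<notin> I" "finite I"
  shows "signed_sum a I (f \<circ> transpose a b) S
    = (if b \<in> S then - signed_sum a I f (insert b (I - S)) else signed_sum a I f S)"
proof -
  have ab: "a \<noteq> b"
    using assms by auto
  have rest: "(\<Sum>i\<in>I - {b}. if i \<in> S then - (f \<circ> transpose a b) i else (f \<circ> transpose a b) i)
      = (\<Sum>i\<in>I - {b}. if i \<in> S then - f i else f i)"
    by (rule sum.cong) (use assms in \<open>auto simp: transpose_def\<close>)
  have rest': "(\<Sum>i\<in>I - {b}. if i \<in> S then - f i else f i)
      = - (\<Sum>i\<in>I - {b}. if i \<notin> S then - f i else f i)"
    by (subst sum_negf[symmetric], rule sum.cong) auto
  show ?thesis
    using assms ab unfolding signed_sum_def
    by (simp add: sum.remove[OF assms(3,1)] rest rest')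
qed

(* Swapping f a and f b fixes the factors with b \<notin> S and maps each factor with b \<in> S to minus
  another one of them; there is an even number of these. *)
lemma signed_prod_transpose_base:
  assumes "b \<in> I" "a \<notin> I" "2 \<le> card I"
  shows "signed_prod a I (f \<circ> transpose a b) = signed_prod a I f"
proof -
  have fin: "finite I"
    using assms(3) by (metis card.infinite not_numeral_le_zero)
  define A0 where "A0 = {S \<in> Pow I. b \<notin> S}"
  define A1 where "A1 = {S \<in> Pow I. b \<in> S}"
  have split: "Pow I = A0 \<union> A1" "A0 \<inter> A1 = {}" "finite A0" "finite A1"
    using fin by (auto simp: A0_def A1_def)
  have "A1 = insert b ` Pow (I - {b})"
  proof (intro equalityI subsetI)
    fix S assume "S \<in> A1"
    then show "S \<in> insert b ` Pow (I - {b})"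
      by (auto simp: A1_def image_iff intro!: bexI[of _ "S - {b}"])
  qed (use assms(1) in \<open>auto simp: A1_def\<close>)
  moreover have "inj_on (insert b) (Pow (I - {b}))"
    by (auto simp: inj_on_def)
  moreover have "card (I - {b}) \<noteq> 0"
    using assms fin by (simp add: card_Diff_singleton)
  ultimately have even: "even (card A1)"
    using even_card_Pow[of "I - {b}"] fin by (auto simp: card_image)
  have "(\<Prod>S\<in>A1. signed_sum a I (f \<circ> transpose a b) S) = (\<Prod>S\<in>A1. - signed_sum a I f (insert b (I - S)))"
    by (rule prod.cong) (simp_all add: A1_def signed_sum_transpose_base[OF assms(1,2) fin])
  also have "\<dots> = (\<Prod>S\<in>A1. signed_sum a I f (insert b (I - S)))"
    using even by (simp add: prod_uminus)
  also have "\<dots> = (\<Prod>S\<in>A1. signed_sum a I f S)"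
    by (rule prod_reindex_involution) (auto simp: A1_def)
  finally have "(\<Prod>S\<in>A1. signed_sum a I (f \<circ> transpose a b) S) = (\<Prod>S\<in>A1. signed_sum a I f S)" .
  moreover have "(\<Prod>S\<in>A0. signed_sum a I (f \<circ> transpose a b) S) = (\<Prod>S\<in>A0. signed_sum a I f S)"
    by (rule prod.cong) (simp_all add: A0_def signed_sum_transpose_base[OF assms(1,2) fin])
  ultimately show ?thesis
    unfolding signed_prod_def split(1) using split by (simp add: prod.union_disjoint)
qed

lemma signed_prod_permutes:
  assumes "2 \<le> card I" "a \<notin> I" "\<pi> permutes insert a I"
  shows "signed_prod a I (f \<circ> \<pi>) = signed_prod a I f"
proof -
  have fin: "finite (insert a I)"
    using assms(1) by (metis card.infinite finite_insert not_numeral_le_zero)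
  have "\<forall>f. signed_prod a I (f \<circ> \<pi>) = signed_prod a I f"
    using assms(3) fin
  proof (induction rule: permutes_induct)
    case (swap x y p)
    have transpose: "signed_prod a I (f \<circ> transpose x y) = signed_prod a I f" for f
    proof -
      consider "x = a" "y \<in> I" | "y = a" "x \<in> I" | "x \<in> I" "y \<in> I"
        using swap.hyps(1-3) by auto
      then show ?thesis
        by cases (use assms(1,2) signed_prod_transpose_base signed_prod_transpose transpose_commute in metis)+
    qed
    show ?case
      using swap.IH transpose by (metis comp_assoc)
  qed simp
  then show ?thesis
    by blast
qed

lemma signed_prod_base_zero:
  assumes "f a = 0" "a \<notin> insert b J" "b \<notin> J" "finite J" "J \<noteq> {}"
  shows "signed_prod a (insert b J) f = signed_prod b J f ^ 2"
proof -
  have without_b: "signed_sum a (insert b J) f S = signed_sum b J f S" if "S \<subseteq> J" for S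
    using assms that by (auto simp: signed_sum_def)
  have with_b: "signed_sum a (insert b J) f (insert b S) = - signed_sum b J f (J - S)" if "S \<subseteq> J" for S
  proof -
    have "(\<Sum>i\<in>J. if i \<in> insert b S then - f i else f i) = - (\<Sum>i\<in>J. if i \<in> J - S then - f i else f i)"
      by (subst sum_negf[symmetric], rule sum.cong) (use assms in auto)
    then show ?thesis
      using assms by (simp add: signed_sum_def)
  qed
  have "(\<Prod>S\<in>insert b ` Pow J. signed_sum a (insert b J) f S)
      = (\<Prod>S\<in>Pow J. - signed_sum b J f (J - S))"
    using assms(3) by (subst prod.reindex) (auto simp: inj_on_def with_b intro!: prod.cong)
  also have "\<dots> = (\<Prod>S\<in>Pow J. signed_sum b J f (J - S))"
    using even_card_Pow[OF assms(4,5)] by (simp add: prod_uminus)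
  also have "\<dots> = signed_prod b J f"
    unfolding signed_prod_def by (rule prod_reindex_involution) auto
  finally have "(\<Prod>S\<in>insert b ` Pow J. signed_sum a (insert b J) f S) = signed_prod b J f" .
  moreover have "(\<Prod>S\<in>Pow J. signed_sum a (insert b J) f S) = signed_prod b J f"
    by (simp add: signed_prod_def without_b)
  moreover have "Pow J \<inter> insert b ` Pow J = {}"
    using assms(3) by auto
  ultimately show ?thesis
    using assms(4) by (simp add: signed_prod_def Pow_insert prod.union_disjoint power2_eq_square)
qed

section \<open>Square roots of the product over all sign choices\<close>

lemma subst_signed_sum: "subst s (signed_sum a I Var S) = signed_sum a I s S"
  by (simp add: signed_sum_def subst_add subst_sum subst_uminus if_distrib cong: if_cong)

lemma subst_signed_prod: "subst s (signed_prod a I Var) = signed_prod a I s"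
  by (simp add: signed_prod_def subst_prod subst_signed_sum)

lemma vars_signed_prod: "vars (signed_prod a I (Var :: nat \<Rightarrow> 'a::comm_ring_1 mpoly)) \<subseteq> insert a I"
  unfolding signed_prod_def signed_sum_def
  by (intro vars_prod_subset vars_add_subset vars_sum_subset) (auto simp: vars_def Var_def)

lemma homogeneous_signed_prod:
  "homogeneous (card (Pow I)) (signed_prod a I (Var :: nat \<Rightarrow> 'a::comm_ring_1 mpoly))"
proof -
  have Var: "m \<in> Poly_Mapping.keys (Var i :: 'a mpoly) \<Longrightarrow> total_deg m = 1" for i m
    by (simp add: Var_def total_deg_def)
  have "homogeneous 1 (signed_sum a I (Var :: nat \<Rightarrow> 'a mpoly) S)" for S
    unfolding signed_sum_def
    by (intro homogeneous_add homogeneous_sum) (auto simp: Var homogeneous_def)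
  then show ?thesis
    unfolding signed_prod_def by (metis homogeneous_prod mult_1)
qed

lemma lookup_signed_sum_Var:
  assumes "finite I" "a \<notin> I"
  shows "Poly_Mapping.lookup (signed_sum a I Var S :: 'a::comm_ring_1 mpoly) (Poly_Mapping.single k 1)
    = (if k = a then 1 else if k \<in> I then if k \<in> S then -1 else 1 else 0)"
proof -
  have Var: "Poly_Mapping.lookup (Var i :: 'a mpoly) (Poly_Mapping.single k 1) = (if i = k then 1 else 0)" for i
  proof -
    have "Poly_Mapping.single i (1::nat) = Poly_Mapping.single k 1 \<longleftrightarrow> i = k"
      by (metis lookup_single_eq lookup_single_not_eq one_neq_zero)
    then show ?thesis
      by (simp add: Var_def lookup_single)
  qed
  have "(\<Sum>i\<in>I. Poly_Mapping.lookup (if i \<in> S then - Var i else Var i :: 'a mpoly) (Poly_Mapping.single k 1))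
      = (\<Sum>i\<in>I. if i = k then if k \<in> S then -1 else 1 else 0)"
    by (rule sum.cong) (auto simp: Var[unfolded One_nat_def])
  also have "\<dots> = (if k \<in> I then if k \<in> S then -1 else 1 else 0)"
    using assms(1) by simp
  finally show ?thesis
    using assms(2) by (simp add: signed_sum_def lookup_add lookup_sum Var[unfolded One_nat_def])
qed

lemma signed_prod_Var_nonzero:
  assumes "finite I" "a \<notin> I"
  shows "signed_prod a I (Var :: nat \<Rightarrow> 'a::idom mpoly) \<noteq> 0"
proof -
  have "signed_sum a I (Var :: nat \<Rightarrow> 'a mpoly) S \<noteq> 0" for S
    using lookup_signed_sum_Var[OF assms, of S a] by (metis lookup_zero zero_neq_one)
  then show ?thesis
    using assms(1) by (simp add: signed_prod_def)
qed

lemma subst_sq_surj_signed_prod: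
  assumes "finite I" "I \<noteq> {}" "a \<notin> I"
  shows "\<exists>q::'a::field_char_0 mpoly. subst_sq q = signed_prod a I Var"
proof (rule subst_sq_surj_if_sign_flip_invariant[OF vars_signed_prod])
  fix j assume "j \<in> insert a I"
  then show "subst (Var(j := - Var j)) (signed_prod a I Var) = signed_prod a I Var"
    using assms by (simp add: subst_signed_prod signed_prod_sign_flip)
qed

lemma vars_if_subst_sq_eq_signed_prod:
  "subst_sq q = signed_prod a I Var \<Longrightarrow> vars q \<subseteq> insert a I"
  by (metis vars_signed_prod vars_subst_sq)

lemma homogeneous_if_subst_sq_eq_signed_prod:
  assumes "finite I" "I \<noteq> {}" "subst_sq q = signed_prod a I Var"
  shows "homogeneous (2 ^ (card I - 1)) q"
proof -
  have "card (Pow I) = 2 * 2 ^ (card I - 1)"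
    using assms(1,2) by (simp add: card_Pow card_gt_0_iff flip: power_Suc)
  then have "homogeneous (2 * 2 ^ (card I - 1)) (subst_sq q)"
    using homogeneous_signed_prod[of I a] assms(3) by simp
  then show ?thesis
    by (simp only: homogeneous_subst_sq_iff)
qed

lemma symmetric_in_if_subst_sq_eq_signed_prod:
  assumes "2 \<le> card I" "a \<notin> I" "subst_sq q = signed_prod a I Var"
  shows "symmetric_in (insert a I) q"
  unfolding symmetric_in_def
proof (intro allI impI)
  fix \<pi> assume \<pi>: "\<pi> permutes insert a I"
  have "subst_sq (subst (\<lambda>i. Var (\<pi> i)) q) = subst (\<lambda>i. Var (\<pi> i)) (subst_sq q)"
    by (rule subst_sq_subst_commute) simp
  also have "\<dots> = signed_prod a I (Var \<circ> \<pi>)"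
    by (simp add: assms(3) subst_signed_prod o_def)
  also have "\<dots> = subst_sq q"
    using signed_prod_permutes[OF assms(1,2) \<pi>] assms(3) by simp
  finally show "subst (\<lambda>i. Var (\<pi> i)) q = q"
    by (simp add: subst_sq_inject)
qed

lemma subst_base_zero_if_subst_sq_eq_signed_prod:
  assumes "a \<notin> insert b J" "b \<notin> J" "finite J" "J \<noteq> {}"
    and "subst_sq q = signed_prod a (insert b J) Var" "subst_sq D = signed_prod b J Var"
  shows "subst (\<lambda>i. if i = a then 0 else Var i) q = D ^ 2"
proof -
  let ?z = "\<lambda>i. if i = a then 0 else Var i"
  have "subst_sq (subst ?z q) = subst ?z (subst_sq q)"
    by (rule subst_sq_subst_commute) simp
  also have "\<dots> = signed_prod b J ?z ^ 2"
    using assms(1-4) by (simp add: assms(5) subst_signed_prod signed_prod_base_zero)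
  also have "\<dots> = signed_prod b J Var ^ 2"
    using assms(1) by (intro arg_cong[where f = "\<lambda>p. p ^ 2"] signed_prod_cong) auto
  also have "\<dots> = subst_sq (D ^ 2)"
    by (simp add: assms(6) subst_power)
  finally show ?thesis
    by (simp add: subst_sq_inject)
qed

section \<open>Irreducibility\<close>

(* Modulo L, every p is congruent to its image under x_a := x_a - L. *)
lemma dvd_iff_subst_eq_0:
  fixes L :: "'a::comm_ring_1 mpoly"
  assumes "subst (Var(a := Var a - L)) L = 0"
  shows "L dvd p \<longleftrightarrow> subst (Var(a := Var a - L)) p = 0"
proof
  assume "L dvd p"
  then show "subst (Var(a := Var a - L)) p = 0"
    using assms by (auto simp: subst_mult elim!: dvdE)
next
  assume "subst (Var(a := Var a - L)) p = 0"
  moreover have "L dvd subst Var p - subst (Var(a := Var a - L)) p"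
    by (rule dvd_subst_diff) simp
  ultimately show "L dvd p"
    by simp
qed

lemma subst_signed_sum_shift:
  assumes "a \<notin> I"
  shows "subst (Var(a := Var a - signed_sum a I Var S)) (signed_sum a I Var S')
    = signed_sum a I Var S' - signed_sum a I (Var :: nat \<Rightarrow> 'a::comm_ring_1 mpoly) S"
proof -
  have "(\<Sum>i\<in>I. if i \<in> S' then - (Var(a := Var a - signed_sum a I Var S)) i
                 else (Var(a := Var a - signed_sum a I Var S)) i)
      = (\<Sum>i\<in>I. if i \<in> S' then - Var i else (Var i :: 'a mpoly))"
    by (rule sum.cong) (use assms in auto)
  then show ?thesis
    by (simp add: subst_signed_sum signed_sum_def[of a I "Var(a := _)"] algebra_simps)
       (simp add: signed_sum_def)
qed

lemma signed_sum_dvd_iff: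
  assumes "a \<notin> I"
  shows "signed_sum a I Var S dvd p
    \<longleftrightarrow> subst (Var(a := Var a - signed_sum a I Var S)) (p :: 'a::comm_ring_1 mpoly) = 0"
  by (rule dvd_iff_subst_eq_0) (simp add: subst_signed_sum_shift assms)

lemma prime_elem_signed_sum:
  assumes "finite I" "a \<notin> I"
  shows "prime_elem (signed_sum a I Var S :: 'a::field mpoly)"
proof (rule prime_elemI)
  have a: "Poly_Mapping.lookup (signed_sum a I Var S :: 'a mpoly) (Poly_Mapping.single a 1) = 1"
    by (simp add: lookup_signed_sum_Var[OF assms, unfolded One_nat_def])
  then show "signed_sum a I Var S \<noteq> (0 :: 'a mpoly)"
    by auto
  have "Poly_Mapping.single a (1::nat) \<noteq> 0"
    by (metis lookup_single_eq lookup_zero one_neq_zero)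
  moreover have "Poly_Mapping.single a 1 \<in> Poly_Mapping.keys (signed_sum a I Var S :: 'a mpoly)"
    using a by (simp add: in_keys_iff)
  ultimately show "\<not> signed_sum a I Var S dvd (1 :: 'a mpoly)"
    by (auto simp: is_unit_mpoly_iff)
qed (simp add: signed_sum_dvd_iff[OF assms(2)] subst_mult)

lemma signed_sum_dvd_signed_sum_iff:
  assumes "finite I" "a \<notin> I" "S \<subseteq> I" "S' \<subseteq> I"
  shows "(signed_sum a I Var S :: 'a::{comm_ring_1, ring_char_0} mpoly) dvd signed_sum a I Var S'
    \<longleftrightarrow> S = S'"
proof
  assume "signed_sum a I Var S dvd (signed_sum a I Var S' :: 'a mpoly)"
  then have diff: "signed_sum a I Var S' - signed_sum a I Var S = (0 :: 'a mpoly)"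
    by (simp add: signed_sum_dvd_iff[OF assms(2)] subst_signed_sum_shift[OF assms(2)])
  show "S = S'"
  proof (rule ccontr)
    assume "S \<noteq> S'"
    then obtain k where k: "k \<in> I" "k \<in> S \<longleftrightarrow> k \<notin> S'"
      using assms(3,4) by blast
    have "Poly_Mapping.lookup (signed_sum a I Var S' - signed_sum a I Var S :: 'a mpoly) (Poly_Mapping.single k 1) = 0"
      by (simp add: diff)
    moreover have "k \<noteq> a"
      using k(1) assms(2) by blast
    ultimately show False
      using k by (auto simp: lookup_minus lookup_signed_sum_Var[OF assms(1,2), unfolded One_nat_def])
  qed
qed simp

lemma prime_elem_dvd_prod_iff:
  assumes "prime_elem p" "finite A"
  shows "p dvd (\<Prod>x\<in>A. f x) \<longleftrightarrow> (\<exists>x\<in>A. p dvd f x)"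
  using assms(2)
  by (induction A rule: finite_induct)
     (auto simp: prime_elem_dvd_mult_iff[OF assms(1)] prime_elem_not_unit[OF assms(1)])

lemma prod_prime_elems_dvd:
  fixes p :: "'b \<Rightarrow> 'a::idom"
  assumes "finite A" "\<And>x. x \<in> A \<Longrightarrow> prime_elem (p x)"
    and "\<And>x y. x \<in> A \<Longrightarrow> y \<in> A \<Longrightarrow> p x dvd p y \<Longrightarrow> x = y"
    and "\<And>x. x \<in> A \<Longrightarrow> p x dvd X"
  shows "(\<Prod>x\<in>A. p x) dvd X"
  using assms
proof (induction A rule: finite_induct)
  case (insert x F)
  then obtain Z where Z: "X = (\<Prod>y\<in>F. p y) * Z"
    by (auto elim!: dvdE)
  have "\<not> p x dvd (\<Prod>y\<in>F. p y)"
    using insert by (subst prime_elem_dvd_prod_iff) auto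
  moreover have "p x dvd (\<Prod>y\<in>F. p y) * Z"
    using insert.prems(3) Z by simp
  ultimately have "p x dvd Z"
    using insert.prems(1) prime_elem_dvd_mult_iff by blast
  then show ?case
    using insert.hyps by (simp add: Z mult.commute mult_dvd_mono)
qed simp

lemma signed_prod_dvd_if_sign_flip_invariant:
  fixes X :: "'a::field_char_0 mpoly"
  assumes "finite I" "a \<notin> I" "signed_sum a I Var {} dvd X"
    and "\<And>j. j \<in> I \<Longrightarrow> subst (Var(j := - Var j)) X = X"
  shows "signed_prod a I Var dvd X"
proof -
  have "signed_sum a I Var S dvd X" if "S \<subseteq> I" for S
  proof -
    have "finite S"
      using that assms(1) finite_subset by blast
    then show ?thesis
      using that
    proof (induction S rule: finite_induct)
      case (insert j S)
      then have "subst (Var(j := - Var j)) (signed_sum a I Var S) dvd subst (Var(j := - Var j)) X"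
        by (auto simp: subst_mult elim!: dvdE)
      with insert assms(2,4) show ?case
        by (simp add: subst_signed_sum signed_sum_sign_flip toggle_def)
    qed (use assms(3) in simp)
  qed
  then show ?thesis
    unfolding signed_prod_def using assms(1,2)
    by (intro prod_prime_elems_dvd) (auto simp: prime_elem_signed_sum signed_sum_dvd_signed_sum_iff)
qed

lemma irreducible_if_subst_sq_eq_signed_prod:
  fixes q :: "'a::field_char_0 mpoly"
  assumes "finite I" "a \<notin> I" "subst_sq q = signed_prod a I Var"
  shows "irreducible q"
proof -
  let ?L = "signed_sum a I Var {} :: 'a mpoly"
  have prime: "prime_elem ?L"
    using assms(1,2) by (rule prime_elem_signed_sum)
  have L_dvd: "?L dvd subst_sq q"
    using assms(1,3) by (auto simp: signed_prod_def intro: dvd_prodI)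
  have nonzero: "subst_sq q \<noteq> 0"
    using assms(3) signed_prod_Var_nonzero[OF assms(1,2)] by simp
  have unit_cofactor: "y dvd 1" if "q = x * y" "?L dvd subst_sq x" for x y
  proof -
    have "subst_sq x * subst_sq y dvd subst_sq x * 1"
      using signed_prod_dvd_if_sign_flip_invariant[OF assms(1,2) that(2) subst_sign_flip_subst_sq]
      by (simp add: that(1) subst_mult flip: assms(3))
    moreover have "subst_sq x \<noteq> 0"
      using nonzero that(1) by (auto simp: subst_mult)
    ultimately have "subst_sq y dvd 1"
      by (subst (asm) dvd_mult_cancel_left) simp
    then show "y dvd 1"
      by (simp add: is_unit_subst_sq_iff)
  qed
  show ?thesis
  proof (rule irreducibleI)
    show "q \<noteq> 0"
      using nonzero by auto
    show "\<not> q dvd 1"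
    proof
      assume "q dvd 1"
      then have "?L dvd 1"
        using L_dvd is_unit_subst_sq_iff dvd_trans by blast
      with prime show False
        by (simp add: prime_elem_not_unit)
    qed
    fix x y assume xy: "q = x * y"
    then have "?L dvd subst_sq x \<or> ?L dvd subst_sq y"
      using L_dvd prime by (simp add: subst_mult prime_elem_dvd_mult_iff)
    then show "x dvd 1 \<or> y dvd 1"
      using unit_cofactor[OF xy] unit_cofactor[of y x] xy by (auto simp: mult.commute)
  qed
qed

section \<open>Extending the coefficients\<close>

abbreviation map_of_rat :: "rat mpoly \<Rightarrow> 'a::field_char_0 mpoly" where
  "map_of_rat \<equiv> Poly_Mapping.map of_rat"

lemma lookup_map_of_rat: "Poly_Mapping.lookup (map_of_rat p) m = of_rat (Poly_Mapping.lookup p m)"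
  by (simp add: map.rep_eq when_def)

lemma keys_map_of_rat: "Poly_Mapping.keys (map_of_rat p :: 'a::field_char_0 mpoly) = Poly_Mapping.keys p"
  by (auto simp: in_keys_iff lookup_map_of_rat)

lemma map_of_rat_add: "map_of_rat (p + q) = (map_of_rat p + map_of_rat q :: 'a::field_char_0 mpoly)"
  by (rule poly_mapping_eqI) (simp add: lookup_map_of_rat lookup_add of_rat_add)

lemma map_of_rat_uminus: "map_of_rat (- p) = (- map_of_rat p :: 'a::field_char_0 mpoly)"
  by (rule poly_mapping_eqI) (simp add: lookup_map_of_rat of_rat_minus)

lemma map_of_rat_sum: "map_of_rat (\<Sum>x\<in>A. f x) = (\<Sum>x\<in>A. map_of_rat (f x) :: 'a::field_char_0 mpoly)"
  by (induction A rule: infinite_finite_induct) (auto simp: map_of_rat_add map_eq_zero_iff)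

lemma map_of_rat_mult: "map_of_rat (p * q) = (map_of_rat p * map_of_rat q :: 'a::field_char_0 mpoly)"
  by (subst (1 2) mult_eq_sum_single)
     (simp add: map_of_rat_sum keys_map_of_rat lookup_map_of_rat of_rat_mult)

lemma map_of_rat_prod: "map_of_rat (\<Prod>x\<in>A. f x) = (\<Prod>x\<in>A. map_of_rat (f x) :: 'a::field_char_0 mpoly)"
proof -
  have "map_of_rat 1 = (1 :: 'a mpoly)"
    by (metis map_single single_one of_rat_0 of_rat_1)
  then show ?thesis
    by (induction A rule: infinite_finite_induct) (auto simp: map_of_rat_mult)
qed

lemma map_of_rat_signed_prod: "map_of_rat (signed_prod a I Var) = (signed_prod a I Var :: 'a::field_char_0 mpoly)"
  by (simp add: signed_prod_def signed_sum_def map_of_rat_prod map_of_rat_add map_of_rat_sum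
      map_of_rat_uminus Var_def if_distrib cong: if_cong)

lemma map_of_rat_subst_sq: "map_of_rat (subst_sq p) = (subst_sq (map_of_rat p) :: 'a::field_char_0 mpoly)"
  by (rule poly_mapping_eqI)
     (simp add: lookup_subst_sq lookup_map_of_rat keys_map_of_rat of_rat_sum when_def if_distrib cong: if_cong)

theorem mainTheorem7:
  "\<exists>\<Delta> :: rat mpoly.
      vars \<Delta> \<subseteq> {0..4} \<and>
      subst (\<lambda>i. Var i ^ 2) \<Delta> = Delta_sqrt \<and>
      symmetric_in {0..4} \<Delta> \<and>
      homogeneous 8 \<Delta> \<and> \<Delta> \<noteq> 0 \<and>
      irreducible (Poly_Mapping.map (of_rat :: rat \<Rightarrow> complex) \<Delta>) \<and>
      (\<exists>D :: rat mpoly. vars D \<subseteq> {1..4} \<and> symmetric_in {1..4} D \<and>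
          homogeneous 4 D \<and>
          subst (\<lambda>i. if i = 0 then 0 else Var i) \<Delta> = D ^ 2)"
proof -
  have I: "{0..4} = insert 0 {1..4::nat}" "{1..4} = insert 1 {2..4::nat}"
    by auto
  obtain \<Delta> :: "rat mpoly" where \<Delta>: "subst_sq \<Delta> = signed_prod 0 {1..4} Var"
    using subst_sq_surj_signed_prod[of "{1..4}" 0] by auto
  obtain D :: "rat mpoly" where D: "subst_sq D = signed_prod 1 {2..4} Var"
    using subst_sq_surj_signed_prod[of "{2..4}" 1] by auto
  have "subst_sq (map_of_rat \<Delta> :: complex mpoly) = signed_prod 0 {1..4} Var"
    by (simp add: \<Delta> map_of_rat_signed_prod flip: map_of_rat_subst_sq)
  then have "irreducible (map_of_rat \<Delta> :: complex mpoly)"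
    by (rule irreducible_if_subst_sq_eq_signed_prod[rotated 2]) auto
  moreover have "\<Delta> \<noteq> 0"
    using \<Delta> signed_prod_Var_nonzero[of "{1..4}" 0] by auto
  moreover have "vars \<Delta> \<subseteq> {0..4}" "vars D \<subseteq> {1..4}"
    using vars_if_subst_sq_eq_signed_prod[OF \<Delta>] vars_if_subst_sq_eq_signed_prod[OF D] I by simp_all
  moreover have "symmetric_in {0..4} \<Delta>" "symmetric_in {1..4} D"
    using symmetric_in_if_subst_sq_eq_signed_prod[of "{1..4}" 0 \<Delta>]
      symmetric_in_if_subst_sq_eq_signed_prod[of "{2..4}" 1 D] \<Delta> D I by simp_all
  moreover have "homogeneous 8 \<Delta>" "homogeneous 4 D"
    using homogeneous_if_subst_sq_eq_signed_prod[OF _ _ \<Delta>]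
      homogeneous_if_subst_sq_eq_signed_prod[OF _ _ D] by simp_all
  moreover have "subst (\<lambda>i. if i = 0 then 0 else Var i) \<Delta> = D ^ 2"
    using subst_base_zero_if_subst_sq_eq_signed_prod[of 0 1 "{2..4}" \<Delta> D] \<Delta> D I by simp
  ultimately show ?thesis
    using \<Delta> by (auto simp: Delta_sqrt_eq_signed_prod)
qed

end
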